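(* Let $n=2^m$ for a positive integer $m$. A set $C\subseteq X^n$ is an $(n,5,n-1;2^{n-1}/n)_3$ code (i.e., $|C|=2^{n-1}/n$ and any two distinct words of $C$ are at Hamming distance at least $5$) if and only if the following two conditions hold: (1) both $e(C)$ and $o(C)$ are binary codes of length $n$, size $2^{n-1}/n$ and minimum distance at least $4$; (2) whenever $\mathbf{x}_1,\mathbf{x}_2\in e(C)$ and $\mathbf{y}_1,\mathbf{y}_2\in o(C)$ satisfy $d(\mathbf{x}_1,\mathbf{y}_1)=d(\mathbf{x}_2,\mathbf{y}_2)=1$ and $d(\mathbf{x}_1,\mathbf{x}_2)=4$, we have $\mathbf{x}_1-\mathbf{x}_2\neq \mathbf{y}_1-\mathbf{y}_2$ (difference taken coordinatewise modulo $2$).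
   Context: $F^n$ is the set of binary words of length $n$; $X^n$ is the set of words of length $n$ over $\{*,0,1\}$ with exactly one $*$ (equivalently, ternary words of length $n$ and weight $n-1$). $d(\cdot,\cdot)$ denotes Hamming distance (number of differing coordinates) on $X^n\cup F^n$. A word $\mathbf{x}\in X^n$ is identified with the pair of binary words obtained by replacing $*$ by $0$ and by $1$; the one of even weight is $e(\mathbf{x})$, the one of odd weight is $o(\mathbf{x})$. For $C\subseteq X^n$, $e(C)=\{e(\mathbf{c}):\mathbf{c}\in C\}$, $o(C)=\{o(\mathbf{c}):\mathbf{c}\in C\}$. *)

theory Defs
  imports Main
begin

text \<open>Binary words are bool lists (True = 1). Words of X^n are bool option lists,
  None playing the role of the symbol *.\<close>

definition hdist :: "'a list \<Rightarrow> 'a list \<Rightarrow> nat" where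
  "hdist xs ys = card {i. i < length xs \<and> xs ! i \<noteq> ys ! i}"

definition Fn :: "nat \<Rightarrow> bool list set" where
  "Fn n = {x. length x = n}"

definition Xn :: "nat \<Rightarrow> bool option list set" where
  "Xn n = {x. length x = n \<and> card {i. i < n \<and> x ! i = None} = 1}"

definition weight :: "bool list \<Rightarrow> nat" where
  "weight x = length (filter id x)"

definition fill :: "bool option list \<Rightarrow> bool \<Rightarrow> bool list" where
  "fill x b = map (\<lambda>c. case c of None \<Rightarrow> b | Some v \<Rightarrow> v) x"

definition e_word :: "bool option list \<Rightarrow> bool list" where
  "e_word x = (if even (weight (fill x False)) then fill x False else fill x True)"

definition o_word :: "bool option list \<Rightarrow> bool list" where
  "o_word x = (if odd (weight (fill x False)) then fill x False else fill x True)"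

definition bdiff :: "bool list \<Rightarrow> bool list \<Rightarrow> bool list" where
  "bdiff x y = map (\<lambda>(a, b). a \<noteq> b) (zip x y)"

definition ternary_code :: "nat \<Rightarrow> nat \<Rightarrow> nat \<Rightarrow> bool option list set \<Rightarrow> bool" where
  "ternary_code n dmin N C \<longleftrightarrow> C \<subseteq> Xn n \<and> card C = N \<and>
     (\<forall>c1\<in>C. \<forall>c2\<in>C. c1 \<noteq> c2 \<longrightarrow> hdist c1 c2 \<ge> dmin)"

definition binary_code :: "nat \<Rightarrow> nat \<Rightarrow> nat \<Rightarrow> bool list set \<Rightarrow> bool" where
  "binary_code n dmin N B \<longleftrightarrow> B \<subseteq> Fn n \<and> card B = N \<and>
     (\<forall>x1\<in>B. \<forall>x2\<in>B. x1 \<noteq> x2 \<longrightarrow> hdist x1 x2 \<ge> dmin)"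

end

theory Submission
  imports Defs
begin

text \<open>Let \<open>a, b \<in> X\<^sup>n\<close> have their stars at positions \<open>p, q\<close>, and let \<open>D\<close> be their distance
  outside \<open>{p, q}\<close>. Then \<open>d(a, b) = D\<close> if \<open>p = q\<close> and \<open>D + 2\<close> otherwise, while any two fillings
  are at distance between \<open>D\<close> and \<open>D + 2\<close>. Distances between even (or between odd) words are even.
  If \<open>p = q\<close>, the differences \<open>e(a) - e(b)\<close> and \<open>o(a) - o(b)\<close> coincide, so condition (2) forbids
  \<open>d(e(a), e(b)) = 4\<close> and parity pushes \<open>D\<close> up to 5. If \<open>p \<noteq> q\<close>, the two differences disagree
  at \<open>p\<close>, and \<open>d(e(a), e(b)) + d(o(a), o(b)) = 2D + 2 \<ge> 8\<close> gives \<open>D \<ge> 3\<close>. Conversely distance 5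
  forces \<open>D \<ge> 3\<close>, so fillings of distinct codewords are at distance at least 3; in particular
  \<open>e\<close> and \<open>o\<close> are injective on \<open>C\<close> and a pair at distance 1 as in (2) comes from one codeword.\<close>

lemma hdist_conv_sum:
  "length xs = n \<Longrightarrow> hdist xs ys = (\<Sum>i<n. if xs ! i \<noteq> ys ! i then 1 else 0)"
  unfolding hdist_def by (simp add: sum.If_cases Int_def conj_commute)

lemma weight_conv_sum: "length xs = n \<Longrightarrow> weight xs = (\<Sum>i<n. if xs ! i then 1 else 0)"
  unfolding weight_def length_filter_conv_card by (simp add: sum.If_cases Int_def conj_commute)

lemma hdist_self [simp]: "hdist xs xs = 0"
  by (simp add: hdist_def)

lemma hdist_eq_0_iff: "length xs = length ys \<Longrightarrow> hdist xs ys = 0 \<longleftrightarrow> xs = ys"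
  by (auto simp: hdist_def list_eq_iff_nth_eq)

lemma even_hdist_add_weight:
  assumes "length xs = n" "length ys = n"
  shows "even (hdist xs ys + weight xs + weight ys)"
proof -
  have "hdist xs ys + weight xs + weight ys =
      (\<Sum>i<n. (if xs ! i \<noteq> ys ! i then 1 else 0) + (if xs ! i then 1 else 0) + (if ys ! i then 1 else 0))"
    using assms by (simp add: hdist_conv_sum weight_conv_sum sum.distrib)
  also have "even \<dots>"
    by (intro dvd_sum) auto
  finally show ?thesis .
qed

lemma odd_le_even_imp_less: "odd j \<Longrightarrow> even k \<Longrightarrow> j \<le> k \<Longrightarrow> j < (k::nat)"
  by (cases "j = k") auto

lemma sum_remove_two:
  fixes f :: "'a \<Rightarrow> 'b::comm_monoid_add"
  assumes "finite A" "p \<in> A" "q \<in> A"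
  shows "sum f A = sum f (A - {p, q}) + f p + (if p = q then 0 else f q)"
proof (cases "p = q")
  case True
  then show ?thesis
    using assms by (simp add: sum.remove add.commute)
next
  case False
  have "sum f A = f p + sum f (A - {p})"
    using assms by (simp add: sum.remove)
  also have "sum f (A - {p}) = f q + sum f (A - {p} - {q})"
    using assms False by (intro sum.remove) auto
  finally show ?thesis
    using False by (simp add: Diff_insert2[symmetric] insert_commute add_ac)
qed

lemma length_fill [simp]: "length (fill c b) = length c"
  by (simp add: fill_def)

lemma nth_fill: "i < length c \<Longrightarrow> fill c b ! i = (case c ! i of None \<Rightarrow> b | Some v \<Rightarrow> v)"
  by (simp add: fill_def)

lemma nth_bdiff: "i < length x \<Longrightarrow> i < length y \<Longrightarrow> bdiff x y ! i = (x ! i \<noteq> y ! i)"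
  by (simp add: bdiff_def)

lemma length_Xn: "c \<in> Xn n \<Longrightarrow> length c = n"
  by (simp add: Xn_def)

lemma XnE:
  assumes "c \<in> Xn n"
  obtains p where "p < n" "c ! p = None" "\<And>i. i < n \<Longrightarrow> i \<noteq> p \<Longrightarrow> c ! i \<noteq> None"
proof -
  from assms have "card {i. i < n \<and> c ! i = None} = 1"
    by (simp add: Xn_def)
  then obtain p where star: "{i. i < n \<and> c ! i = None} = {p}"
    by (rule card_1_singletonE)
  show ?thesis
    by (rule that[of p]) (use star in \<open>auto simp: set_eq_iff\<close>)
qed

locale star_pair =
  fixes n :: nat and a b :: "bool option list" and p q :: nat
  assumes length_a: "length a = n" and length_b: "length b = n"
    and p_less: "p < n" and q_less: "q < n"
    and star_a: "a ! p = None" and star_b: "b ! q = None"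
    and letter_a: "\<And>i. i < n \<Longrightarrow> i \<noteq> p \<Longrightarrow> a ! i \<noteq> None"
    and letter_b: "\<And>i. i < n \<Longrightarrow> i \<noteq> q \<Longrightarrow> b ! i \<noteq> None"
begin

definition off_star_dist :: nat where
  "off_star_dist = (\<Sum>i\<in>{..<n} - {p, q}. if a ! i \<noteq> b ! i then 1 else 0)"

lemma hdist_eq_off_star_dist: "hdist a b = off_star_dist + (if p = q then 0 else 2)"
proof -
  have "hdist a b = off_star_dist + (if a ! p \<noteq> b ! p then 1 else 0)
      + (if p = q then 0 else if a ! q \<noteq> b ! q then 1 else 0)"
    unfolding off_star_dist_def using length_a p_less q_less
    by (simp add: hdist_conv_sum sum_remove_two[of "{..<n}" p q])
  then show ?thesis
    using star_a star_b letter_a[of q] letter_b[of p] p_less q_less by (cases "p = q") auto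
qed

lemma hdist_fill_eq_off_star_dist:
  "hdist (fill a x) (fill b y) = off_star_dist + (if p = q then (if x \<noteq> y then 1 else 0)
     else (if x \<noteq> the (b ! p) then 1 else 0) + (if the (a ! q) \<noteq> y then 1 else 0))"
proof -
  have off_star: "(if fill a x ! i \<noteq> fill b y ! i then 1 else 0) = (if a ! i \<noteq> b ! i then 1 else (0::nat))"
    if "i \<in> {..<n} - {p, q}" for i
    using letter_a[of i] letter_b[of i] that length_a length_b by (auto simp: nth_fill)
  then have "(\<Sum>i\<in>{..<n} - {p, q}. if fill a x ! i \<noteq> fill b y ! i then 1 else 0) = off_star_dist"
    unfolding off_star_dist_def by (rule sum.cong[OF refl])
  then have "hdist (fill a x) (fill b y) = off_star_dist + (if fill a x ! p \<noteq> fill b y ! p then 1 else 0)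
      + (if p = q then 0 else if fill a x ! q \<noteq> fill b y ! q then 1 else 0)"
    using length_a p_less q_less by (simp add: hdist_conv_sum sum_remove_two[of "{..<n}" p q])
  moreover have "fill a x ! p = x" "fill b y ! q = y"
    using star_a star_b p_less q_less length_a length_b by (simp_all add: nth_fill)
  moreover have "fill b y ! p = the (b ! p)" "fill a x ! q = the (a ! q)" if "p \<noteq> q"
    using letter_a[OF q_less] letter_b[OF p_less] that p_less q_less length_a length_b
    by (auto simp: nth_fill)
  ultimately show ?thesis
    by (cases "p = q") simp_all
qed

lemma off_star_dist_le_hdist_fill: "off_star_dist \<le> hdist (fill a x) (fill b y)"
  by (simp add: hdist_fill_eq_off_star_dist)

lemma hdist_fill_add_hdist_fill_complement:
  "p \<noteq> q \<Longrightarrow> hdist (fill a x) (fill b y) + hdist (fill a (\<not> x)) (fill b (\<not> y)) = 2 * off_star_dist + 2"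
  by (cases x; cases y) (auto simp: hdist_fill_eq_off_star_dist)

lemma bdiff_fill_complement_eq:
  assumes "p = q"
  shows "bdiff (fill a x) (fill b y) = bdiff (fill a (\<not> x)) (fill b (\<not> y))"
proof (rule nth_equalityI)
  fix i assume "i < length (bdiff (fill a x) (fill b y))"
  then have "i < n"
    using length_a length_b by (simp add: bdiff_def)
  then show "bdiff (fill a x) (fill b y) ! i = bdiff (fill a (\<not> x)) (fill b (\<not> y)) ! i"
    using letter_a[of i] letter_b[of i] star_a star_b assms length_a length_b
    by (cases "i = p") (auto simp: nth_bdiff nth_fill)
qed (simp add: bdiff_def length_a length_b)

lemma bdiff_fill_complement_neq:
  assumes "p \<noteq> q"
  shows "bdiff (fill a x) (fill b y) \<noteq> bdiff (fill a (\<not> x)) (fill b y')"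
proof
  assume eq: "bdiff (fill a x) (fill b y) = bdiff (fill a (\<not> x)) (fill b y')"
  obtain v where v: "b ! p = Some v"
    using letter_b[OF p_less] assms by fastforce
  have "bdiff (fill a z) (fill b w) ! p = (z \<noteq> v)" for z w
    using p_less length_a length_b v star_a by (simp add: nth_bdiff nth_fill)
  then show False
    using eq by (metis (full_types))
qed

lemma hdist_fill_ge_4_if_hdist_ge_5:
  assumes "even (hdist (fill a x) (fill b y))" "5 \<le> hdist a b"
  shows "4 \<le> hdist (fill a x) (fill b y)"
proof -
  have "3 \<le> off_star_dist"
    using assms(2) hdist_eq_off_star_dist by (cases "p = q") auto
  then have "3 \<le> hdist (fill a x) (fill b y)"
    using off_star_dist_le_hdist_fill order_trans by blast
  then show ?thesis
    using assms(1) odd_le_even_imp_less[of 3] by fastforce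
qed

lemma bdiff_fill_neq_if_hdist_ge_5:
  assumes "5 \<le> hdist a b" "hdist (fill a x) (fill b y) = 4"
  shows "bdiff (fill a x) (fill b y) \<noteq> bdiff (fill a (\<not> x)) (fill b (\<not> y))"
proof (cases "p = q")
  case True
  then show ?thesis
    using assms hdist_eq_off_star_dist off_star_dist_le_hdist_fill[of x y] by auto
qed (simp add: bdiff_fill_complement_neq)

lemma hdist_ge_5_if_same_star:
  assumes "p = q" "a \<noteq> b" "even (hdist (fill a x) (fill b y))"
    and "fill a x \<noteq> fill b y \<Longrightarrow> 4 \<le> hdist (fill a x) (fill b y)"
    and "hdist (fill a x) (fill b y) = 4 \<Longrightarrow>
      bdiff (fill a x) (fill b y) \<noteq> bdiff (fill a (\<not> x)) (fill b (\<not> y))"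
  shows "5 \<le> hdist a b"
proof -
  have dist_ab: "hdist a b = off_star_dist"
    using assms(1) by (simp add: hdist_eq_off_star_dist)
  have dist: "hdist (fill a x) (fill b y) = off_star_dist + (if x \<noteq> y then 1 else 0)"
    using assms(1) by (simp add: hdist_fill_eq_off_star_dist)
  have "hdist a b \<noteq> 0"
    using assms(2) hdist_eq_0_iff[of a b] length_a length_b by simp
  then have "fill a x \<noteq> fill b y"
    using dist dist_ab by auto
  then have "4 \<le> hdist (fill a x) (fill b y)"
    by (rule assms(4))
  moreover have "hdist (fill a x) (fill b y) \<noteq> 4"
    using assms(5) bdiff_fill_complement_eq[OF assms(1)] by blast
  ultimately have "6 \<le> hdist (fill a x) (fill b y)"
    using assms(3) odd_le_even_imp_less[of 5] by fastforce
  then show ?thesis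
    using dist dist_ab by (cases "x = y") auto
qed

lemma hdist_ge_5_if_distinct_stars:
  assumes "p \<noteq> q"
    and x: "fill a x \<noteq> fill b y \<Longrightarrow> 4 \<le> hdist (fill a x) (fill b y)"
    and not_x: "fill a (\<not> x) \<noteq> fill b (\<not> y) \<Longrightarrow> 4 \<le> hdist (fill a (\<not> x)) (fill b (\<not> y))"
  shows "5 \<le> hdist a b"
proof -
  note sum = hdist_fill_add_hdist_fill_complement[OF assms(1), of x y]
  have "fill a x \<noteq> fill b y"
  proof
    assume "fill a x = fill b y"
    then have "hdist (fill a (\<not> x)) (fill b (\<not> y)) = 2"
      using sum off_star_dist_le_hdist_fill[of x y] by simp
    then show False
      using not_x by fastforce
  qed
  moreover have "fill a (\<not> x) \<noteq> fill b (\<not> y)"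
  proof
    assume "fill a (\<not> x) = fill b (\<not> y)"
    then have "hdist (fill a x) (fill b y) = 2"
      using sum off_star_dist_le_hdist_fill[of "\<not> x" "\<not> y"] by simp
    then show False
      using x by fastforce
  qed
  ultimately show ?thesis
    using x not_x sum hdist_eq_off_star_dist assms(1) by simp
qed

lemma hdist_ge_5_iff:
  assumes "even (hdist (fill a x) (fill b y))" "even (hdist (fill a (\<not> x)) (fill b (\<not> y)))"
    and "a \<noteq> b"
  shows "5 \<le> hdist a b \<longleftrightarrow>
    (fill a x \<noteq> fill b y \<longrightarrow> 4 \<le> hdist (fill a x) (fill b y)) \<and>
    (fill a (\<not> x) \<noteq> fill b (\<not> y) \<longrightarrow> 4 \<le> hdist (fill a (\<not> x)) (fill b (\<not> y))) \<and>
    (hdist (fill a x) (fill b y) = 4 \<longrightarrow>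
       bdiff (fill a x) (fill b y) \<noteq> bdiff (fill a (\<not> x)) (fill b (\<not> y)))"
    (is "_ \<longleftrightarrow> ?c1 \<and> ?c2 \<and> ?c3")
proof
  assume "5 \<le> hdist a b"
  then show "?c1 \<and> ?c2 \<and> ?c3"
    using hdist_fill_ge_4_if_hdist_ge_5[OF assms(1)] hdist_fill_ge_4_if_hdist_ge_5[OF assms(2)]
      bdiff_fill_neq_if_hdist_ge_5 by simp
next
  assume "?c1 \<and> ?c2 \<and> ?c3"
  then show "5 \<le> hdist a b"
    using hdist_ge_5_if_same_star[OF _ assms(3,1)] hdist_ge_5_if_distinct_stars[of x y]
    by (cases "p = q") simp_all
qed

end

definition e_bit :: "bool option list \<Rightarrow> bool" where
  "e_bit c = odd (weight (fill c False))"

lemma e_word_eq_fill: "e_word c = fill c (e_bit c)"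
  by (simp add: e_word_def e_bit_def)

lemma o_word_eq_fill: "o_word c = fill c (\<not> e_bit c)"
  by (simp add: o_word_def e_bit_def)

lemma star_pair_XnE:
  assumes "a \<in> Xn n" "b \<in> Xn n"
  obtains p q where "star_pair n a b p q"
proof -
  obtain p where "p < n" "a ! p = None" "\<And>i. i < n \<Longrightarrow> i \<noteq> p \<Longrightarrow> a ! i \<noteq> None"
    using XnE[OF assms(1)] by blast
  moreover obtain q where "q < n" "b ! q = None" "\<And>i. i < n \<Longrightarrow> i \<noteq> q \<Longrightarrow> b ! i \<noteq> None"
    using XnE[OF assms(2)] by blast
  ultimately have "star_pair n a b p q"
    using assms by (simp add: star_pair_def length_Xn)
  then show ?thesis
    by (rule that)
qed

lemma hdist_fill_fill_complement:
  assumes "c \<in> Xn n"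
  shows "hdist (fill c x) (fill c (\<not> x)) = 1"
proof -
  obtain p q where "star_pair n c c p q"
    using assms assms by (rule star_pair_XnE)
  then interpret star_pair n c c p q .
  have "p = q"
    using star_a star_b letter_a p_less q_less by blast
  moreover have "off_star_dist = 0"
    by (simp add: off_star_dist_def)
  ultimately show ?thesis
    by (simp add: hdist_fill_eq_off_star_dist)
qed

lemma hdist_e_word_o_word: "c \<in> Xn n \<Longrightarrow> hdist (e_word c) (o_word c) = 1"
  by (simp add: e_word_eq_fill o_word_eq_fill hdist_fill_fill_complement)

lemma odd_weight_fill_add_weight_fill_complement:
  assumes "c \<in> Xn n"
  shows "odd (weight (fill c False) + weight (fill c True))"
proof -
  have "even (hdist (fill c False) (fill c True) + weight (fill c False) + weight (fill c True))"
    using even_hdist_add_weight length_Xn[OF assms] by simp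
  then show ?thesis
    using hdist_fill_fill_complement[OF assms, of False] by auto
qed

lemma even_weight_e_word: "c \<in> Xn n \<Longrightarrow> even (weight (e_word c))"
  using odd_weight_fill_add_weight_fill_complement by (fastforce simp: e_word_def)

lemma odd_weight_o_word: "c \<in> Xn n \<Longrightarrow> odd (weight (o_word c))"
  using odd_weight_fill_add_weight_fill_complement by (fastforce simp: o_word_def)

lemma even_hdist_e_word: "a \<in> Xn n \<Longrightarrow> b \<in> Xn n \<Longrightarrow> even (hdist (e_word a) (e_word b))"
  using even_hdist_add_weight[of "e_word a" n "e_word b"] even_weight_e_word[of a n]
    even_weight_e_word[of b n] by (simp add: e_word_eq_fill length_Xn)

lemma even_hdist_o_word: "a \<in> Xn n \<Longrightarrow> b \<in> Xn n \<Longrightarrow> even (hdist (o_word a) (o_word b))"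
  using even_hdist_add_weight[of "o_word a" n "o_word b"] odd_weight_o_word[of a n]
    odd_weight_o_word[of b n] by (simp add: o_word_eq_fill length_Xn)

lemma hdist_le_hdist_fill_add_2:
  assumes "a \<in> Xn n" "b \<in> Xn n"
  shows "hdist a b \<le> hdist (fill a x) (fill b y) + 2"
proof -
  obtain p q where "star_pair n a b p q"
    using assms by (rule star_pair_XnE)
  then interpret star_pair n a b p q .
  show ?thesis
    using hdist_eq_off_star_dist off_star_dist_le_hdist_fill[of x y] by auto
qed

lemma Xn_hdist_ge_5_iff:
  assumes "a \<in> Xn n" "b \<in> Xn n" "a \<noteq> b"
  shows "5 \<le> hdist a b \<longleftrightarrow>
    (e_word a \<noteq> e_word b \<longrightarrow> 4 \<le> hdist (e_word a) (e_word b)) \<and>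
    (o_word a \<noteq> o_word b \<longrightarrow> 4 \<le> hdist (o_word a) (o_word b)) \<and>
    (hdist (e_word a) (e_word b) = 4 \<longrightarrow>
       bdiff (e_word a) (e_word b) \<noteq> bdiff (o_word a) (o_word b))"
proof -
  obtain p q where "star_pair n a b p q"
    using assms(1,2) by (rule star_pair_XnE)
  then interpret star_pair n a b p q .
  show ?thesis
    using hdist_ge_5_iff[of "e_bit a" "e_bit b"] assms
      even_hdist_e_word[of a n b] even_hdist_o_word[of a n b]
    by (simp add: e_word_eq_fill o_word_eq_fill)
qed

definition min_dist_ge :: "nat \<Rightarrow> 'a list set \<Rightarrow> bool" where
  "min_dist_ge d A \<longleftrightarrow> (\<forall>x\<in>A. \<forall>y\<in>A. x \<noteq> y \<longrightarrow> d \<le> hdist x y)"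

definition differences_separated :: "bool list set \<Rightarrow> bool list set \<Rightarrow> bool" where
  "differences_separated X Y \<longleftrightarrow> (\<forall>x1\<in>X. \<forall>x2\<in>X. \<forall>y1\<in>Y. \<forall>y2\<in>Y.
     hdist x1 y1 = 1 \<and> hdist x2 y2 = 1 \<and> hdist x1 x2 = 4 \<longrightarrow> bdiff x1 x2 \<noteq> bdiff y1 y2)"

lemma differences_separatedD:
  "differences_separated X Y \<Longrightarrow> x1 \<in> X \<Longrightarrow> x2 \<in> X \<Longrightarrow> y1 \<in> Y \<Longrightarrow> y2 \<in> Y \<Longrightarrow>
    hdist x1 y1 = 1 \<Longrightarrow> hdist x2 y2 = 1 \<Longrightarrow> hdist x1 x2 = 4 \<Longrightarrow> bdiff x1 x2 \<noteq> bdiff y1 y2"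
  unfolding differences_separated_def by blast

lemma hdist_fill_ge_3_if_min_dist_ge_5:
  assumes "C \<subseteq> Xn n" "min_dist_ge 5 C" "a \<in> C" "b \<in> C" "a \<noteq> b"
  shows "3 \<le> hdist (fill a x) (fill b y)"
proof -
  have "5 \<le> hdist a b"
    using assms(2-5) by (simp add: min_dist_ge_def)
  then show ?thesis
    using hdist_le_hdist_fill_add_2[of a n b x y] assms(1,3,4) by fastforce
qed

lemma inj_on_fill_if_min_dist_ge_5:
  assumes "C \<subseteq> Xn n" "min_dist_ge 5 C"
  shows "inj_on (\<lambda>c. fill c (f c)) C"
proof (rule inj_onI, rule ccontr)
  fix a b assume "a \<in> C" "b \<in> C" "fill a (f a) = fill b (f b)" "a \<noteq> b"
  then show False
    using hdist_fill_ge_3_if_min_dist_ge_5[OF assms, of a b "f a" "f b"] by simp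
qed

lemma eq_if_hdist_e_word_o_word_eq_1:
  assumes "C \<subseteq> Xn n" "min_dist_ge 5 C" "a \<in> C" "b \<in> C" "hdist (e_word a) (o_word b) = 1"
  shows "a = b"
proof (rule ccontr)
  assume "a \<noteq> b"
  then have "3 \<le> hdist (e_word a) (o_word b)"
    unfolding e_word_eq_fill o_word_eq_fill
    by (rule hdist_fill_ge_3_if_min_dist_ge_5[OF assms(1-4)])
  then show False
    using assms(5) by simp
qed

lemma differences_separated_if_min_dist_ge_5:
  assumes C: "C \<subseteq> Xn n" and sep: "min_dist_ge 5 C"
  shows "differences_separated (e_word ` C) (o_word ` C)"
  unfolding differences_separated_def
proof (intro ballI impI)
  fix x1 x2 y1 y2
  assume "x1 \<in> e_word ` C" "x2 \<in> e_word ` C" "y1 \<in> o_word ` C" "y2 \<in> o_word ` C"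
    and dist: "hdist x1 y1 = 1 \<and> hdist x2 y2 = 1 \<and> hdist x1 x2 = 4"
  then obtain a b a' b' where ab: "a \<in> C" "b \<in> C" "a' \<in> C" "b' \<in> C"
    and words: "x1 = e_word a" "x2 = e_word b" "y1 = o_word a'" "y2 = o_word b'"
    by blast
  have "a' = a" "b' = b"
    using eq_if_hdist_e_word_o_word_eq_1[OF C sep] ab words dist by metis+
  moreover have "a \<noteq> b"
    using dist words by auto
  then have "5 \<le> hdist a b"
    using sep ab by (simp add: min_dist_ge_def)
  ultimately show "bdiff x1 x2 \<noteq> bdiff y1 y2"
    using Xn_hdist_ge_5_iff[of a n b] C ab words dist \<open>a \<noteq> b\<close> by auto
qed

lemma min_dist_ge_5_iff:
  assumes C: "C \<subseteq> Xn n"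
  shows "min_dist_ge 5 C \<longleftrightarrow> min_dist_ge 4 (e_word ` C) \<and> min_dist_ge 4 (o_word ` C) \<and>
    differences_separated (e_word ` C) (o_word ` C)"
proof
  assume sep: "min_dist_ge 5 C"
  have "(e_word a \<noteq> e_word b \<longrightarrow> 4 \<le> hdist (e_word a) (e_word b)) \<and>
    (o_word a \<noteq> o_word b \<longrightarrow> 4 \<le> hdist (o_word a) (o_word b))"
    if "a \<in> C" "b \<in> C" "a \<noteq> b" for a b
    using Xn_hdist_ge_5_iff[of a n b] that sep C by (auto simp: min_dist_ge_def)
  then have "min_dist_ge 4 (e_word ` C) \<and> min_dist_ge 4 (o_word ` C)"
    by (auto simp: min_dist_ge_def)
  with differences_separated_if_min_dist_ge_5[OF C sep]
  show "min_dist_ge 4 (e_word ` C) \<and> min_dist_ge 4 (o_word ` C) \<and>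
      differences_separated (e_word ` C) (o_word ` C)"
    by blast
next
  assume codes: "min_dist_ge 4 (e_word ` C) \<and> min_dist_ge 4 (o_word ` C) \<and>
    differences_separated (e_word ` C) (o_word ` C)"
  show "min_dist_ge 5 C"
    unfolding min_dist_ge_def
  proof (intro ballI impI)
    fix a b assume ab: "a \<in> C" "b \<in> C" "a \<noteq> b"
    have "hdist (e_word a) (o_word a) = 1" "hdist (e_word b) (o_word b) = 1"
      using C ab hdist_e_word_o_word by blast+
    then have "hdist (e_word a) (e_word b) = 4 \<longrightarrow> bdiff (e_word a) (e_word b) \<noteq> bdiff (o_word a) (o_word b)"
      using codes differences_separatedD ab by blast
    moreover have "e_word a \<noteq> e_word b \<longrightarrow> 4 \<le> hdist (e_word a) (e_word b)"
      "o_word a \<noteq> o_word b \<longrightarrow> 4 \<le> hdist (o_word a) (o_word b)"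
      using codes ab by (simp_all add: min_dist_ge_def)
    ultimately show "5 \<le> hdist a b"
      using Xn_hdist_ge_5_iff[of a n b] C ab by blast
  qed
qed

theorem lemma2:
  fixes m n :: nat and C :: "bool option list set"
  assumes "m > 0" and "n = 2 ^ m" and "C \<subseteq> Xn n"
  shows "ternary_code n 5 (2 ^ (n - 1) div n) C \<longleftrightarrow>
    (binary_code n 4 (2 ^ (n - 1) div n) (e_word ` C) \<and>
     binary_code n 4 (2 ^ (n - 1) div n) (o_word ` C) \<and>
     (\<forall>x1\<in>e_word ` C. \<forall>x2\<in>e_word ` C. \<forall>y1\<in>o_word ` C. \<forall>y2\<in>o_word ` C.
        hdist x1 y1 = 1 \<and> hdist x2 y2 = 1 \<and> hdist x1 x2 = 4 \<longrightarrow>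
        bdiff x1 x2 \<noteq> bdiff y1 y2))"
proof -
  let ?N = "2 ^ (n - 1) div n"
  have words: "e_word ` C \<subseteq> Fn n" "o_word ` C \<subseteq> Fn n"
    using assms(3) by (auto simp: Fn_def e_word_eq_fill o_word_eq_fill length_Xn)
  have card_images: "card (e_word ` C) = card C" "card (o_word ` C) = card C"
    if "min_dist_ge 5 C"
    unfolding e_word_eq_fill[abs_def] o_word_eq_fill[abs_def]
    by (rule card_image, rule inj_on_fill_if_min_dist_ge_5[OF assms(3) that])+
  have "ternary_code n 5 ?N C \<longleftrightarrow> card C = ?N \<and> min_dist_ge 5 C"
    using assms(3) by (simp add: ternary_code_def min_dist_ge_def)
  also have "\<dots> \<longleftrightarrow> (card (e_word ` C) = ?N \<and> min_dist_ge 4 (e_word ` C)) \<and>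
      (card (o_word ` C) = ?N \<and> min_dist_ge 4 (o_word ` C)) \<and>
      differences_separated (e_word ` C) (o_word ` C)"
    using min_dist_ge_5_iff[OF assms(3)] card_images by auto
  finally show ?thesis
    using words by (simp add: binary_code_def min_dist_ge_def differences_separated_def)
qed

end
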